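(* Let $0 \leq a \leq b$. For any $t>0$ and $\lambda \in [0,+\infty)$, \[ |f_t(\lambda) - \tilde{\mathbf{1}}_{[a,b]}(\lambda)| \leq \begin{cases} s(t|\lambda - a|) & \text{if } \lambda \in [0,a)\cup\{b\},\\ s(t|\lambda-a|) + s(t|\lambda-b|) & \text{if } \lambda\in(a,b),\\ s(t|\lambda-b|) & \text{if } \lambda\in\{a\}\cup(b,+\infty), \end{cases} \] where $s:(0,+\infty)\to\mathbb{R}$ is $s(\rho) = \frac{e^{-\rho^2}}{2\sqrt\pi\,\rho}$.
   Context: For $0\le a\le b$ and $t>0$, $f_t(\lambda) = \frac{t}{\sqrt\pi}\int_a^b\exp(-t^2(\lambda-\mu)^2)\,d\mu$. The function $\tilde{\mathbf{1}}_{[a,b]}$ equals $1$ on $(a,b)$, $\frac12$ at $x=a$ and at $x=b$, and $0$ elsewhere. (When $a=b$, the cases are read with the conventions as printed.) *)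

theory Defs
  imports "HOL-Analysis.Analysis"
begin

definition f_t :: "real \<Rightarrow> real \<Rightarrow> real \<Rightarrow> real \<Rightarrow> real" where
  "f_t a b t lam = t / sqrt pi * integral {a..b} (\<lambda>\<mu>. exp (- (t\<^sup>2 * (lam - \<mu>)\<^sup>2)))"

definition ind_tilde :: "real \<Rightarrow> real \<Rightarrow> real \<Rightarrow> real" where
  "ind_tilde a b x = (if a < x \<and> x < b then 1 else if x = a \<or> x = b then 1/2 else 0)"

text \<open>s is only meaningful for rho > 0.\<close>
definition s_fun :: "real \<Rightarrow> real" where
  "s_fun \<rho> = exp (- (\<rho>\<^sup>2)) / (2 * sqrt pi * \<rho>)"

end

theory Submission
  imports Defs "HOL-Probability.Distributions" "HOL-Real_Asymp.Real_Asymp"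
begin

text \<open>
  Substituting \<open>x = t (\<lambda> - \<mu>)\<close> gives \<open>f\<^sub>t(\<lambda>) = \<Phi>(t(\<lambda>-a)) - \<Phi>(t(\<lambda>-b))\<close>, where \<open>\<Phi>\<close> is
  the distribution function of the density \<open>exp(-x\<^sup>2)/\<surd>\<pi>\<close>, while the smoothed indicator is
  \<open>H(\<lambda>-a) - H(\<lambda>-b)\<close> for the Heaviside function \<open>H\<close> with \<open>H(0) = 1/2\<close> (this fails only
  for \<open>a = b = \<lambda>\<close>, the excluded case). So the error is \<open>E(t(\<lambda>-a)) - E(t(\<lambda>-b))\<close> with
  \<open>E = \<Phi> - H\<close>. Now \<open>E(0) = 0\<close>, and for \<open>x \<noteq> 0\<close> the value \<open>|E(x)|\<close> is the Gaussian tail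
  \<open>\<integral>\<^bsub>|x|\<^esub>\<^bsup>\<infinity>\<^esup> exp(-u\<^sup>2) du / \<surd>\<pi>\<close>, which is at most \<open>s(|x|)\<close> because
  \<open>exp(-u\<^sup>2) \<le> (u/|x|) exp(-u\<^sup>2)\<close> for \<open>u \<ge> |x|\<close>. Outside \<open>[a,b]\<close> both arguments lie on
  the same side of 0, where \<open>E\<close> is monotone and of constant sign, so only the nearer endpoint
  contributes.
\<close>

lemma has_bochner_integral_exp_minus_squared:
  "has_bochner_integral lborel (\<lambda>x::real. exp (- x\<^sup>2)) (sqrt pi)"
  using has_bochner_integral_even_function[OF gaussian_moment_even_pos[where k=0]] by simp

lemma has_integral_exp_minus_squared: "((\<lambda>x::real. exp (- x\<^sup>2)) has_integral sqrt pi) UNIV"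
  using has_bochner_integral_exp_minus_squared
  by (metis has_bochner_integral_iff has_integral_integral_lborel)

lemma exp_minus_squared_absolutely_integrable_on:
  assumes "S \<in> sets lebesgue"
  shows "(\<lambda>x::real. exp (- x\<^sup>2)) absolutely_integrable_on S"
proof (rule set_integrable_subset[of _ UNIV])
  show "set_integrable lebesgue UNIV (\<lambda>x::real. exp (- x\<^sup>2))"
    using has_bochner_integral_exp_minus_squared
    by (simp add: set_integrable_def integrable_completion has_bochner_integral_iff)
qed (use assms in auto)

lemma exp_minus_squared_integrable_on:
  "S \<in> sets lebesgue \<Longrightarrow> (\<lambda>x::real. exp (- x\<^sup>2)) integrable_on S"
  by (rule set_lebesgue_integral_eq_integral(1)) (rule exp_minus_squared_absolutely_integrable_on)

lemma has_integral_x_exp_minus_squared_to_infinity: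
  assumes "c \<ge> 0"
  shows "((\<lambda>x::real. x * exp (- x\<^sup>2)) has_integral exp (- c\<^sup>2) / 2) {c..}"
proof (intro has_integral_to_inf integrable_continuous_interval continuous_intros)
  have "((\<lambda>x. x * exp (- x\<^sup>2)) has_integral (- exp (- y\<^sup>2) / 2 - (- exp (- c\<^sup>2) / 2))) {c..y}"
    if "c \<le> y" for y
    using that
    by (intro fundamental_theorem_of_calculus)
      (auto intro!: derivative_eq_intros simp: power2_eq_square
        simp flip: has_real_derivative_iff_has_vector_derivative)
  then have "\<forall>\<^sub>F y in at_top. integral {c..y} (\<lambda>x. x * exp (- x\<^sup>2)) = - exp (- y\<^sup>2) / 2 + exp (- c\<^sup>2) / 2"
    unfolding eventually_at_top_linorder by auto
  moreover have "((\<lambda>y::real. - exp (- y\<^sup>2) / 2 + exp (- c\<^sup>2) / 2) \<longlongrightarrow> exp (- c\<^sup>2) / 2) at_top"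
    by real_asymp
  ultimately show "((\<lambda>y. integral {c..y} (\<lambda>x. x * exp (- x\<^sup>2))) \<longlongrightarrow> exp (- c\<^sup>2) / 2) at_top"
    by (simp add: filterlim_cong)
qed (use assms in auto)

lemma integral_exp_minus_squared_atLeast_le:
  assumes "r > 0"
  shows "integral {r..} (\<lambda>x::real. exp (- x\<^sup>2)) \<le> exp (- r\<^sup>2) / (2 * r)"
proof (rule has_integral_le)
  show "((\<lambda>x::real. exp (- x\<^sup>2)) has_integral integral {r..} (\<lambda>x. exp (- x\<^sup>2))) {r..}"
    by (intro integrable_integral exp_minus_squared_integrable_on) simp
  show "((\<lambda>x. x * exp (- x\<^sup>2) / r) has_integral exp (- r\<^sup>2) / (2 * r)) {r..}"
    using has_integral_divide[OF has_integral_x_exp_minus_squared_to_infinity, of r r] assms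
    by simp
  show "exp (- x\<^sup>2) \<le> x * exp (- x\<^sup>2) / r" if "x \<in> {r..}" for x
    using that assms by (simp add: field_simps)
qed

definition gauss_cdf :: "real \<Rightarrow> real" where
  "gauss_cdf x = integral {..x} (\<lambda>u. exp (- u\<^sup>2)) / sqrt pi"

lemma integral_exp_minus_squared_atLeast:
  "integral {x..} (\<lambda>u. exp (- u\<^sup>2)) = sqrt pi * (1 - gauss_cdf x)"
proof -
  let ?g = "\<lambda>u::real. exp (- u\<^sup>2)"
  have "(?g has_integral (integral {..x} ?g + integral {x..} ?g)) ({..x} \<union> {x..})"
  proof (intro has_integral_Un integrable_integral exp_minus_squared_integrable_on)
    have "{..x} \<inter> {x..} = {x}"
      by auto
    then show "negligible ({..x} \<inter> {x..})"
      by simp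
  qed simp_all
  moreover have "{..x} \<union> {x..} = UNIV"
    by auto
  ultimately have "integral {..x} ?g + integral {x..} ?g = sqrt pi"
    using has_integral_exp_minus_squared by (metis has_integral_unique)
  then show ?thesis
    by (simp add: gauss_cdf_def algebra_simps)
qed

lemma integral_exp_minus_squared_atLeastAtMost:
  assumes "x \<le> y"
  shows "integral {x..y} (\<lambda>u. exp (- u\<^sup>2)) = sqrt pi * (gauss_cdf y - gauss_cdf x)"
proof -
  let ?g = "\<lambda>u::real. exp (- u\<^sup>2)"
  have "(?g has_integral (integral {..x} ?g + integral {x..y} ?g)) ({..x} \<union> {x..y})"
    using assms by (intro has_integral_Un integrable_integral exp_minus_squared_integrable_on) auto
  moreover have "{..x} \<union> {x..y} = {..y}"
    using assms by auto
  ultimately have "integral {..y} ?g = integral {..x} ?g + integral {x..y} ?g"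
    by (simp add: integral_unique)
  then show ?thesis
    by (simp add: gauss_cdf_def field_simps)
qed

lemma gauss_cdf_uminus: "gauss_cdf (- x) = 1 - gauss_cdf x"
proof -
  let ?g = "\<lambda>u::real. exp (- u\<^sup>2)"
  have "uminus ` {..-x} \<subseteq> {x..}" "uminus ` {x..} \<subseteq> {..-x}"
    by auto
  from has_absolute_integral_reflect_real[OF this, of ?g "integral {x..} ?g"]
  have "integral {..-x} ?g = integral {x..} ?g"
    by (simp add: exp_minus_squared_absolutely_integrable_on)
  then show ?thesis
    by (simp add: gauss_cdf_def integral_exp_minus_squared_atLeast)
qed

lemma gauss_cdf_nonneg: "0 \<le> gauss_cdf x"
  unfolding gauss_cdf_def
  by (intro divide_nonneg_nonneg integral_nonneg exp_minus_squared_integrable_on) auto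

lemma gauss_cdf_le_1: "gauss_cdf x \<le> 1"
  using gauss_cdf_nonneg[of "- x"] by (simp add: gauss_cdf_uminus)

lemma gauss_cdf_mono:
  assumes "x \<le> y"
  shows "gauss_cdf x \<le> gauss_cdf y"
proof -
  have "0 \<le> integral {x..y} (\<lambda>u. exp (- u\<^sup>2))"
    by (intro integral_nonneg integrable_continuous_interval continuous_intros) auto
  then show ?thesis
    using assms pi_gt_zero by (auto simp: integral_exp_minus_squared_atLeastAtMost zero_le_mult_iff)
qed

lemma gauss_cdf_0: "gauss_cdf 0 = 1 / 2"
  using gauss_cdf_uminus[of 0] by simp

lemma gauss_cdf_uminus_le_s_fun:
  assumes "r > 0"
  shows "gauss_cdf (- r) \<le> s_fun r"
proof -
  have "sqrt pi * gauss_cdf (- r) \<le> exp (- r\<^sup>2) / (2 * r)"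
    using integral_exp_minus_squared_atLeast_le[OF assms]
    by (simp add: integral_exp_minus_squared_atLeast gauss_cdf_uminus)
  with assms show ?thesis
    by (simp add: s_fun_def field_simps)
qed

definition heaviside :: "real \<Rightarrow> real" where
  "heaviside x = (if 0 < x then 1 else if x = 0 then 1 / 2 else 0)"

lemma heaviside_mult_pos [simp]: "t > 0 \<Longrightarrow> heaviside (t * x) = heaviside x"
  by (simp add: heaviside_def zero_less_mult_iff)

lemma ind_tilde_eq_heaviside_diff:
  assumes "a \<le> b" and "\<not> (a = b \<and> x = a)"
  shows "ind_tilde a b x = heaviside (x - a) - heaviside (x - b)"
  using assms by (auto simp: ind_tilde_def heaviside_def)

definition gauss_step_error :: "real \<Rightarrow> real" where
  "gauss_step_error x = gauss_cdf x - heaviside x"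

lemma gauss_step_error_0 [simp]: "gauss_step_error 0 = 0"
  by (simp add: gauss_step_error_def gauss_cdf_0 heaviside_def)

lemma abs_gauss_step_error_le:
  assumes "x \<noteq> 0"
  shows "\<bar>gauss_step_error x\<bar> \<le> s_fun \<bar>x\<bar>"
proof (cases "x < 0")
  case True
  then show ?thesis
    using gauss_cdf_nonneg[of x] gauss_cdf_uminus_le_s_fun[of "- x"]
    by (simp add: gauss_step_error_def heaviside_def)
next
  case False
  with assms show ?thesis
    using gauss_cdf_nonneg[of "- x"] gauss_cdf_uminus_le_s_fun[of x]
    by (simp add: gauss_step_error_def heaviside_def gauss_cdf_uminus)
qed

lemma abs_gauss_step_error_diff_le_neg:
  assumes "y \<le> x" and "x < 0"
  shows "\<bar>gauss_step_error x - gauss_step_error y\<bar> \<le> s_fun \<bar>x\<bar>"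
  using abs_gauss_step_error_le[of x] gauss_cdf_mono[OF assms(1)] gauss_cdf_nonneg[of y] assms
  by (simp add: gauss_step_error_def heaviside_def)

lemma abs_gauss_step_error_diff_le_pos:
  assumes "y \<le> x" and "0 < y"
  shows "\<bar>gauss_step_error x - gauss_step_error y\<bar> \<le> s_fun \<bar>y\<bar>"
  using abs_gauss_step_error_le[of y] gauss_cdf_mono[OF assms(1)] gauss_cdf_le_1[of x] assms
  by (simp add: gauss_step_error_def heaviside_def)

lemma integral_exp_minus_squared_scaled:
  fixes t a b lam :: real
  assumes "t > 0" and "a \<le> b"
  shows "integral {a..b} (\<lambda>\<mu>. exp (- (t\<^sup>2 * (lam - \<mu>)\<^sup>2)))
    = integral {t * (a - lam)..t * (b - lam)} (\<lambda>x. exp (- x\<^sup>2)) / t"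
proof -
  let ?g = "\<lambda>x::real. exp (- x\<^sup>2)"
  let ?J = "integral {t * (a - lam)..t * (b - lam)} ?g"
  have "(?g has_integral ?J) {t * (a - lam)..t * (b - lam)}"
    by (intro integrable_integral integrable_continuous_interval continuous_intros)
  from has_integral_affinity'[OF this[folded cbox_interval] \<open>t > 0\<close>, of "- (t * lam)"]
  have "((\<lambda>\<mu>. ?g (t * \<mu> - t * lam)) has_integral ?J / t) {a..b}"
    using assms by (simp add: field_simps)
  moreover have "?g (t * \<mu> - t * lam) = exp (- (t\<^sup>2 * (lam - \<mu>)\<^sup>2))" for \<mu>
    by (simp add: power2_eq_square algebra_simps)
  ultimately show ?thesis
    by (simp add: integral_unique)
qed

lemma f_t_eq_gauss_cdf:
  assumes "t > 0" and "a \<le> b"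
  shows "f_t a b t lam = gauss_cdf (t * (lam - a)) - gauss_cdf (t * (lam - b))"
proof -
  have "t * (a - lam) \<le> t * (b - lam)"
    using assms by simp
  then have "f_t a b t lam = gauss_cdf (t * (b - lam)) - gauss_cdf (t * (a - lam))"
    using assms
    by (simp add: f_t_def integral_exp_minus_squared_scaled integral_exp_minus_squared_atLeastAtMost)
  also have "\<dots> = gauss_cdf (t * (lam - a)) - gauss_cdf (t * (lam - b))"
    using gauss_cdf_uminus[of "t * (lam - a)"] gauss_cdf_uminus[of "t * (lam - b)"]
    by (simp add: algebra_simps)
  finally show ?thesis .
qed

lemma f_t_minus_ind_tilde:
  assumes "t > 0" and "a \<le> b" and "\<not> (a = b \<and> lam = a)"
  shows "f_t a b t lam - ind_tilde a b lam
    = gauss_step_error (t * (lam - a)) - gauss_step_error (t * (lam - b))"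
  using assms by (simp add: gauss_step_error_def f_t_eq_gauss_cdf ind_tilde_eq_heaviside_diff)

theorem lemma3p3:
  fixes a b t lam :: real
  assumes "0 \<le> a" and "a \<le> b" and "t > 0" and "0 \<le> lam"
    and "\<not> (a = b \<and> lam = a)"
  shows "(lam \<in> {0..<a} \<union> {b} \<longrightarrow>
            \<bar>f_t a b t lam - ind_tilde a b lam\<bar> \<le> s_fun (t * \<bar>lam - a\<bar>))
       \<and> (lam \<in> {a<..<b} \<longrightarrow>
            \<bar>f_t a b t lam - ind_tilde a b lam\<bar> \<le> s_fun (t * \<bar>lam - a\<bar>) + s_fun (t * \<bar>lam - b\<bar>))
       \<and> (lam \<in> {a} \<union> {b<..} \<longrightarrow>
            \<bar>f_t a b t lam - ind_tilde a b lam\<bar> \<le> s_fun (t * \<bar>lam - b\<bar>))"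
proof -
  define x y where "x = t * (lam - a)" and "y = t * (lam - b)"
  have err: "f_t a b t lam - ind_tilde a b lam = gauss_step_error x - gauss_step_error y"
    using \<open>t > 0\<close> \<open>a \<le> b\<close> assms(5) unfolding x_def y_def by (rule f_t_minus_ind_tilde)
  have dist: "t * \<bar>lam - a\<bar> = \<bar>x\<bar>" "t * \<bar>lam - b\<bar> = \<bar>y\<bar>"
    using \<open>t > 0\<close> by (simp_all add: x_def y_def abs_mult)
  have "y \<le> x"
    using assms by (simp add: x_def y_def)
  note error_bounds = abs_gauss_step_error_le abs_gauss_step_error_diff_le_neg[OF \<open>y \<le> x\<close>]
    abs_gauss_step_error_diff_le_pos[OF \<open>y \<le> x\<close>]
  show ?thesis
  proof (intro conjI impI)
    assume "lam \<in> {0..<a} \<union> {b}"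
    then have "x < 0 \<or> x \<noteq> 0 \<and> y = 0"
      using assms by (auto simp: x_def y_def mult_less_0_iff)
    then show "\<bar>f_t a b t lam - ind_tilde a b lam\<bar> \<le> s_fun (t * \<bar>lam - a\<bar>)"
      unfolding err dist using error_bounds by auto
  next
    assume "lam \<in> {a<..<b}"
    then have "x \<noteq> 0" "y \<noteq> 0"
      using \<open>t > 0\<close> by (auto simp: x_def y_def)
    then show "\<bar>f_t a b t lam - ind_tilde a b lam\<bar> \<le> s_fun (t * \<bar>lam - a\<bar>) + s_fun (t * \<bar>lam - b\<bar>)"
      using abs_gauss_step_error_le[of x] abs_gauss_step_error_le[of y]
        abs_triangle_ineq4[of "gauss_step_error x" "gauss_step_error y"]
      unfolding err dist by linarith
  next
    assume "lam \<in> {a} \<union> {b<..}"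
    then have "x = 0 \<and> y \<noteq> 0 \<or> 0 < y"
      using assms by (auto simp: x_def y_def)
    then show "\<bar>f_t a b t lam - ind_tilde a b lam\<bar> \<le> s_fun (t * \<bar>lam - b\<bar>)"
      unfolding err dist using error_bounds by auto
  qed
qed

end
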